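(* Let $b:\mathbb R^n\to\mathbb R^n$ be locally Lipschitz continuous and suppose there are $R\ge0$, $\kappa>0$ with $\langle b(x)-b(y),x-y\rangle\le-\kappa|x-y|^2$ for all $x,y\in\mathbb R^n\setminus B_R$. Then for any $\bar\kappa\in(0,\kappa)$ there is $\bar R>0$ such that $\langle b(x)-b(y),x-y\rangle\le-\bar\kappa|x-y|^2$ for all $y\in\mathbb R^n$ and all $|x|>\bar R$.
   Context: $B_R$ denotes the closed (or open) ball of radius $R$ about the origin in $\mathbb R^n$. *)

theory Defs
  imports "HOL-Analysis.Analysis"
begin

definition locally_lipschitz :: "('a::metric_space \<Rightarrow> 'b::metric_space) \<Rightarrow> bool" where
  "locally_lipschitz f \<longleftrightarrow> (\<forall>x. \<exists>e>0. \<exists>L. L-lipschitz_on (ball x e) f)"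

end

theory Submission
  imports Defs
begin

text \<open>Outside \<open>B\<^sub>R\<close> the estimate holds with \<open>\<kappa>\<close> itself. If \<open>|y| \<le> R\<close> and \<open>x\<close> is far out,
move from \<open>y\<close> away from \<open>x\<close> along the line through both, by the distance \<open>2R + 1\<close>, to a
point \<open>z\<close> with \<open>R < |z| \<le> 3R + 1\<close>. The pair \<open>x, z\<close> contributes at most \<open>-\<kappa> |x - y|\<^sup>2\<close> and the
pair \<open>z, y\<close> at most \<open>2M |x - y|\<close>, where \<open>M\<close> bounds \<open>|b|\<close> on \<open>B\<^bsub>3R+1\<^esub>\<close>; the linear term is
absorbed into \<open>(\<kappa> - \<kappa>') |x - y|\<^sup>2\<close> once \<open>|x - y| \<ge> 2M / (\<kappa> - \<kappa>')\<close>.\<close>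

lemma locally_lipschitz_imp_continuous_on:
  assumes "locally_lipschitz f"
  shows "continuous_on S f"
proof -
  have "isCont f x" for x
  proof -
    obtain e L where "e > 0" and "L-lipschitz_on (ball x e) f"
      using assms unfolding locally_lipschitz_def by blast
    then show ?thesis
      using lipschitz_on_continuous_on continuous_on_interior by fastforce
  qed
  then show ?thesis
    by (simp add: continuous_at_imp_continuous_on)
qed

lemma inner_le_neg_norm_sq_unscale:
  fixes u v :: "'a::real_inner"
  assumes "u \<bullet> (s *\<^sub>R v) \<le> - \<kappa> * (norm (s *\<^sub>R v))\<^sup>2" and "1 \<le> s" and "0 \<le> \<kappa>"
  shows "u \<bullet> v \<le> - \<kappa> * (norm v)\<^sup>2"
proof -
  have "s * (u \<bullet> v) \<le> s * (- \<kappa> * s * (norm v)\<^sup>2)"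
    using assms(1,2) by (simp add: power2_eq_square algebra_simps)
  then have "u \<bullet> v \<le> - \<kappa> * s * (norm v)\<^sup>2"
    using assms(2) by (meson mult_le_cancel_left_pos zero_less_one less_le_trans)
  also have "\<dots> \<le> - \<kappa> * (norm v)\<^sup>2"
    using assms(2,3) by (intro mult_right_mono) (auto simp: mult_le_cancel_left1)
  finally show ?thesis .
qed

lemma ray_point_at_distance:
  fixes x y :: "'a::real_normed_vector"
  assumes "x \<noteq> y" and "0 \<le> c"
  obtains z s where "x - z = s *\<^sub>R (x - y)" and "1 \<le> s" and "dist z y = c"
proof
  let ?t = "c / norm (x - y)"
  show "x - (y - ?t *\<^sub>R (x - y)) = (1 + ?t) *\<^sub>R (x - y)"
    by (simp add: algebra_simps)
  show "1 \<le> 1 + ?t"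
    using assms by simp
  show "dist (y - ?t *\<^sub>R (x - y)) y = c"
    using assms by (simp add: dist_norm)
qed

lemma dissipative_estimate_inner_point:
  fixes b :: "'a::real_inner \<Rightarrow> 'a" and R \<kappa> M :: real
  assumes M: "\<And>z. norm z \<le> 3 * R + 1 \<Longrightarrow> norm (b z) \<le> M"
    and dissipative: "\<And>x y. norm x > R \<Longrightarrow> norm y > R \<Longrightarrow>
           (b x - b y) \<bullet> (x - y) \<le> - \<kappa> * (norm (x - y))\<^sup>2"
    and "0 \<le> R" and "0 \<le> \<kappa>" and "R < norm x" and "norm y \<le> R"
  shows "(b x - b y) \<bullet> (x - y) \<le> - \<kappa> * (norm (x - y))\<^sup>2 + 2 * M * norm (x - y)"
proof -
  have "x \<noteq> y"
    using assms(5,6) by auto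
  then obtain z s where xz: "x - z = s *\<^sub>R (x - y)" and "1 \<le> s" and "dist z y = 2 * R + 1"
    using ray_point_at_distance[of x y "2 * R + 1"] \<open>0 \<le> R\<close> by auto
  then have "R < norm z" and "norm z \<le> 3 * R + 1"
    using \<open>norm y \<le> R\<close> norm_triangle_ineq4[of z y] norm_triangle_sub[of z y]
    unfolding dist_norm by linarith+
  have "(b x - b z) \<bullet> (s *\<^sub>R (x - y)) \<le> - \<kappa> * (norm (s *\<^sub>R (x - y)))\<^sup>2"
    using dissipative[of x z] \<open>R < norm x\<close> \<open>R < norm z\<close> xz by simp
  then have "(b x - b z) \<bullet> (x - y) \<le> - \<kappa> * (norm (x - y))\<^sup>2"
    using inner_le_neg_norm_sq_unscale \<open>1 \<le> s\<close> \<open>0 \<le> \<kappa>\<close> by blast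
  moreover have "norm (b z - b y) \<le> 2 * M"
    using M[of z] M[of y] \<open>norm z \<le> 3 * R + 1\<close> \<open>norm y \<le> R\<close> \<open>0 \<le> R\<close>
      norm_triangle_ineq4[of "b z" "b y"]
    by linarith
  then have "(b z - b y) \<bullet> (x - y) \<le> 2 * M * norm (x - y)"
    using norm_cauchy_schwarz[of "b z - b y" "x - y"] mult_right_mono[of _ _ "norm (x - y)"]
    by fastforce
  moreover have "(b x - b y) \<bullet> (x - y) = (b x - b z) \<bullet> (x - y) + (b z - b y) \<bullet> (x - y)"
    by (simp add: inner_diff_left)
  ultimately show ?thesis by linarith
qed

lemma dissipative_outside_ball_imp_dissipative_far:
  fixes b :: "'a::real_inner \<Rightarrow> 'a" and R \<kappa> \<kappa>' :: real
  assumes bounded: "bounded (b ` cball 0 (3 * R + 1))"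
    and "0 \<le> R" and "0 < \<kappa>'" and "\<kappa>' < \<kappa>"
    and dissipative: "\<And>x y. norm x > R \<Longrightarrow> norm y > R \<Longrightarrow>
           (b x - b y) \<bullet> (x - y) \<le> - \<kappa> * (norm (x - y))\<^sup>2"
  shows "\<exists>R'>0. \<forall>x y. norm x > R' \<longrightarrow>
           (b x - b y) \<bullet> (x - y) \<le> - \<kappa>' * (norm (x - y))\<^sup>2"
proof -
  obtain M where "0 < M" and M: "\<And>z. norm z \<le> 3 * R + 1 \<Longrightarrow> norm (b z) \<le> M"
    using bounded unfolding bounded_pos by auto
  define R' where "R' = R + 2 * M / (\<kappa> - \<kappa>') + 1"
  have "0 < 2 * M / (\<kappa> - \<kappa>')"
    using \<open>0 < M\<close> \<open>\<kappa>' < \<kappa>\<close> by simp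
  then have "0 < R'" and "R < R'"
    using \<open>0 \<le> R\<close> unfolding R'_def by linarith+
  moreover have "(b x - b y) \<bullet> (x - y) \<le> - \<kappa>' * (norm (x - y))\<^sup>2" if x: "norm x > R'" for x y
  proof (cases "norm y > R")
    case True
    have "- \<kappa> * (norm (x - y))\<^sup>2 \<le> - \<kappa>' * (norm (x - y))\<^sup>2"
      using \<open>\<kappa>' < \<kappa>\<close> by (simp add: mult_right_mono)
    with dissipative[of x y] x True \<open>R < R'\<close> show ?thesis by linarith
  next
    case False
    define d where "d = norm (x - y)"
    have "norm x - norm y \<le> d"
      unfolding d_def by (rule norm_triangle_ineq2)
    then have "2 * M / (\<kappa> - \<kappa>') < d"
      using x False unfolding R'_def by linarith
    then have "2 * M * d \<le> (\<kappa> - \<kappa>') * d * d"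
      using \<open>\<kappa>' < \<kappa>\<close> \<open>0 < 2 * M / (\<kappa> - \<kappa>')\<close>
      by (intro mult_right_mono) (auto simp: pos_divide_less_eq mult.commute d_def)
    then have "- \<kappa> * d\<^sup>2 + 2 * M * d \<le> - \<kappa>' * d\<^sup>2"
      by (simp add: power2_eq_square algebra_simps)
    moreover have "(b x - b y) \<bullet> (x - y) \<le> - \<kappa> * d\<^sup>2 + 2 * M * d"
      unfolding d_def
      using M dissipative x False \<open>R < R'\<close> \<open>0 \<le> R\<close> \<open>0 < \<kappa>'\<close> \<open>\<kappa>' < \<kappa>\<close>
      by (intro dissipative_estimate_inner_point[where R = R]) auto
    ultimately show ?thesis
      unfolding d_def by linarith
  qed
  ultimately show ?thesis by blast
qed

theorem lemma2p9:
  fixes b :: "real^'n \<Rightarrow> real^'n" and R \<kappa> :: real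
  assumes "locally_lipschitz b"
    and "R \<ge> 0" and "\<kappa> > 0"
    and "\<And>x y. norm x > R \<Longrightarrow> norm y > R \<Longrightarrow>
           (b x - b y) \<bullet> (x - y) \<le> - \<kappa> * (norm (x - y))\<^sup>2"
  shows "\<forall>\<kappa>'. 0 < \<kappa>' \<and> \<kappa>' < \<kappa> \<longrightarrow>
           (\<exists>R'>0. \<forall>x y. norm x > R' \<longrightarrow>
              (b x - b y) \<bullet> (x - y) \<le> - \<kappa>' * (norm (x - y))\<^sup>2)"
proof (intro allI impI)
  fix \<kappa>' :: real
  assume "0 < \<kappa>' \<and> \<kappa>' < \<kappa>"
  moreover have "bounded (b ` cball 0 (3 * R + 1))"
    using locally_lipschitz_imp_continuous_on[OF assms(1)]
    by (intro compact_imp_bounded compact_continuous_image) auto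
  ultimately show "\<exists>R'>0. \<forall>x y. norm x > R' \<longrightarrow>
           (b x - b y) \<bullet> (x - y) \<le> - \<kappa>' * (norm (x - y))\<^sup>2"
    using dissipative_outside_ball_imp_dissipative_far assms(2,4) by blast
qed

end
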